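(* Let $k,l\ge1$ and $\lambda\in\mathbb{Y}_{k,l}$ with $\lambda_l=0$. Then there exists a partition $\mathcal{P}$ of $\mathbb{Y}_{k,l}(\lambda)$ such that every block of $\mathcal{P}$ can be written as $\{\lambda^{(1)},\dots,\lambda^{(m)}\}$ with $m\ge2$ and $\lambda^{(1)}\nearrow\lambda^{(2)}\nearrow\cdots\nearrow\lambda^{(m)}$.
   Context: $\mathbb{Y}_{k,l}=\{(\lambda_1,\dots,\lambda_l)\in\mathbb{Z}^l\mid k\ge\lambda_1\ge\cdots\ge\lambda_l\ge0\}$ (Young diagrams fitting in a $k\times l$ rectangle). For $\lambda\in\mathbb{Y}_{k,l}$, $\mathbb{Y}_{k,l}(\lambda)=\{\mu\in\mathbb{Y}_{k,l}\mid \lambda_i\le\mu_i,\ i=1,\dots,l\}$. For $\lambda,\mu\in\mathbb{Y}_{k,l}$, $\lambda\nearrow\mu$ means $\mu$ is obtained from $\lambda$ by adding one box, i.e. $\mu_j=\lambda_j+1$ for exactly one index $j$ and $\mu_i=\lambda_i$ for all $i\ne j$. *)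

theory Defs
  imports Main "HOL-Library.Disjoint_Sets"
begin

text \<open>Young diagrams in a k x l rectangle, represented as lists of length l
  (entry i-1 of the list is lambda_i).\<close>

definition young :: "nat \<Rightarrow> nat \<Rightarrow> nat list set" where
  "young k l = {lam. length lam = l \<and> (\<forall>i<l. lam ! i \<le> k)
      \<and> (\<forall>i j. i \<le> j \<longrightarrow> j < l \<longrightarrow> lam ! j \<le> lam ! i)}"

definition young_above :: "nat \<Rightarrow> nat \<Rightarrow> nat list \<Rightarrow> nat list set" where
  "young_above k l lam = {mu \<in> young k l. \<forall>i<l. lam ! i \<le> mu ! i}"

definition add_box :: "nat list \<Rightarrow> nat list \<Rightarrow> bool" where
  "add_box lam mu \<longleftrightarrow> length mu = length lam \<and>
     (\<exists>j<length lam. mu ! j = lam ! j + 1 \<and> (\<forall>i<length lam. i \<noteq> j \<longrightarrow> mu ! i = lam ! i))"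

end

theory Submission
  imports Defs
begin

text \<open>Induction on the number of rows. Slicing by the first row a, the diagrams above
  b # bs are the diagrams a # mu with b \<le> a \<le> k and mu above bs inside an a-wide
  rectangle. If the last entry of bs is below b, every slice is covered by induction.
  Otherwise bs is the constant row b, the slices a = b and a = b + 1 together form a
  single chain from b^l to (b+1)^l, and the remaining slices are again covered by
  induction.\<close>

definition add_box_chain :: "nat list list \<Rightarrow> bool" where
  "add_box_chain xs \<longleftrightarrow> (\<forall>i. Suc i < length xs \<longrightarrow> add_box (xs ! i) (xs ! Suc i))"

definition chain_partitionable :: "nat list set \<Rightarrow> bool" where
  "chain_partitionable S \<longleftrightarrow> (\<exists>P. partition_on S P \<and>
    (\<forall>B\<in>P. \<exists>xs. B = set xs \<and> length xs \<ge> 2 \<and> add_box_chain xs))"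

lemma add_box_Cons: "add_box x y \<Longrightarrow> add_box (a # x) (a # y)"
  unfolding add_box_def
proof (elim conjE exE)
  fix j assume h: "length y = length x" "j < length x" "y ! j = x ! j + 1"
    "\<forall>i<length x. i \<noteq> j \<longrightarrow> y ! i = x ! i"
  show "length (a # y) = length (a # x) \<and>
    (\<exists>j<length (a # x). (a # y) ! j = (a # x) ! j + 1 \<and>
      (\<forall>i<length (a # x). i \<noteq> j \<longrightarrow> (a # y) ! i = (a # x) ! i))"
  proof (intro conjI exI[of _ "Suc j"] allI impI)
    fix i assume "i < length (a # x)" "i \<noteq> Suc j"
    then show "(a # y) ! i = (a # x) ! i" using h by (cases i) auto
  qed (use h in auto)
qed

lemma add_box_Suc_hd: "add_box (c # x) (Suc c # x)"
  unfolding add_box_def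
  by (rule conjI, simp, rule exI[of _ 0]) (auto simp: nth_Cons split: nat.splits)

lemma add_box_chain_map_Cons: "add_box_chain xs \<Longrightarrow> add_box_chain (map (Cons a) xs)"
  unfolding add_box_chain_def by (auto intro: add_box_Cons)

lemma add_box_chain_Cons:
  "add_box_chain xs \<Longrightarrow> xs \<noteq> [] \<Longrightarrow> add_box x (hd xs) \<Longrightarrow> add_box_chain (x # xs)"
  unfolding add_box_chain_def
  by (intro allI impI, case_tac i) (auto simp: hd_conv_nth)

lemma chain_partitionable_empty: "chain_partitionable {}"
  unfolding chain_partitionable_def by (rule exI[of _ "{}"]) (simp add: partition_on_empty)

lemma chain_partitionable_set:
  "length xs \<ge> 2 \<Longrightarrow> add_box_chain xs \<Longrightarrow> chain_partitionable (set xs)"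
  unfolding chain_partitionable_def
  by (rule exI[of _ "{set xs}"]) (use partition_on_space[of "set xs"] in force)

lemma chain_partitionable_Un:
  assumes "chain_partitionable A" "chain_partitionable B" "A \<inter> B = {}"
  shows "chain_partitionable (A \<union> B)"
proof -
  obtain P where P: "partition_on A P"
    "\<forall>C\<in>P. \<exists>xs. C = set xs \<and> length xs \<ge> 2 \<and> add_box_chain xs"
    using assms(1) unfolding chain_partitionable_def by blast
  obtain Q where Q: "partition_on B Q"
    "\<forall>C\<in>Q. \<exists>xs. C = set xs \<and> length xs \<ge> 2 \<and> add_box_chain xs"
    using assms(2) unfolding chain_partitionable_def by blast
  have "partition_on (A \<union> B) (P \<union> Q)"
    using P(1) Q(1) assms(3) unfolding partition_on_def by (auto intro!: disjoint_union)
  then show ?thesis unfolding chain_partitionable_def using P(2) Q(2) by blast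
qed

lemma chain_partitionable_UN:
  assumes "finite I" "\<And>a. a \<in> I \<Longrightarrow> chain_partitionable (S a)"
    and "\<And>a b. a \<in> I \<Longrightarrow> b \<in> I \<Longrightarrow> a \<noteq> b \<Longrightarrow> S a \<inter> S b = {}"
  shows "chain_partitionable (\<Union>a\<in>I. S a)"
  using assms
proof (induction I rule: finite_induct)
  case empty then show ?case by (simp add: chain_partitionable_empty)
next
  case (insert x F)
  then have "chain_partitionable (S x \<union> (\<Union>a\<in>F. S a))"
    by (intro chain_partitionable_Un) auto
  then show ?case by simp
qed

lemma chain_partitionable_image_Cons:
  assumes "chain_partitionable S"
  shows "chain_partitionable (Cons a ` S)"
proof -
  obtain P where P: "partition_on S P"
    "\<forall>C\<in>P. \<exists>xs. C = set xs \<and> length xs \<ge> 2 \<and> add_box_chain xs"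
    using assms unfolding chain_partitionable_def by blast
  have "partition_on (Cons a ` S) ((`) (Cons a) ` P - {{}})"
    by (rule partition_on_inj_image[OF P(1)]) (auto simp: inj_on_def)
  moreover have "\<exists>xs. B = set xs \<and> length xs \<ge> 2 \<and> add_box_chain xs"
    if B: "B \<in> (`) (Cons a) ` P - {{}}" for B
  proof -
    obtain C where C: "C \<in> P" "B = Cons a ` C" using B by blast
    then obtain xs where "C = set xs" "length xs \<ge> 2" "add_box_chain xs" using P(2) by blast
    then show ?thesis
      using C by (intro exI[of _ "map (Cons a) xs"]) (auto simp: add_box_chain_map_Cons)
  qed
  ultimately show ?thesis unfolding chain_partitionable_def by blast
qed

lemma chain_partitionable_UN_image_Cons:
  assumes "finite A" "\<And>a. a \<in> A \<Longrightarrow> chain_partitionable (S a)"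
  shows "chain_partitionable (\<Union>a\<in>A. Cons a ` S a)"
  using assms by (intro chain_partitionable_UN chain_partitionable_image_Cons) auto

lemma young_0: "young k 0 = {[]}"
  unfolding young_def by auto

lemma young_mono: "v \<in> young a m \<Longrightarrow> a \<le> b \<Longrightarrow> v \<in> young b m"
  unfolding young_def by force

lemma Cons_in_young_Suc_iff: "a # v \<in> young k (Suc m) \<longleftrightarrow> a \<le> k \<and> v \<in> young a m"
proof
  assume "a # v \<in> young k (Suc m)"
  then have L: "length v = m" and B: "\<And>i. i < Suc m \<Longrightarrow> (a # v) ! i \<le> k"
    and M: "\<And>i j. i \<le> j \<Longrightarrow> j < Suc m \<Longrightarrow> (a # v) ! j \<le> (a # v) ! i"
    unfolding young_def by auto
  have "\<forall>i<m. v ! i \<le> a" using M[of 0 "Suc _"] by simp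
  moreover have "\<forall>i j. i \<le> j \<longrightarrow> j < m \<longrightarrow> v ! j \<le> v ! i" using M[of "Suc _" "Suc _"] by simp
  ultimately show "a \<le> k \<and> v \<in> young a m" using L B[of 0] unfolding young_def by simp
next
  assume "a \<le> k \<and> v \<in> young a m"
  then have L: "length v = m" and B: "\<And>i. i < m \<Longrightarrow> v ! i \<le> a"
    and M: "\<And>i j. i \<le> j \<Longrightarrow> j < m \<Longrightarrow> v ! j \<le> v ! i" and ak: "a \<le> k"
    unfolding young_def by auto
  have "\<forall>i<Suc m. (a # v) ! i \<le> k"
    using ak B by (auto simp: nth_Cons split: nat.split intro: order_trans)
  moreover have "(a # v) ! j \<le> (a # v) ! i" if "i \<le> j" "j < Suc m" for i j
    using that B M by (cases j; cases i) auto
  ultimately show "a # v \<in> young k (Suc m)" using L unfolding young_def by auto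
qed

lemma young_above_Cons:
  "young_above k (Suc m) (b # bs) = (\<Union>a\<in>{b..k}. Cons a ` young_above a m bs)"
proof (intro set_eqI iffI)
  fix x assume x: "x \<in> young_above k (Suc m) (b # bs)"
  then obtain a v where xv: "x = a # v"
    unfolding young_above_def young_def by (cases x) auto
  have "a \<le> k" "v \<in> young a m"
    using x xv Cons_in_young_Suc_iff by (auto simp: young_above_def)
  moreover have "b \<le> a" "\<forall>i<m. bs ! i \<le> v ! i"
    using x xv unfolding young_above_def by (force, auto)
  ultimately show "x \<in> (\<Union>a\<in>{b..k}. Cons a ` young_above a m bs)"
    using xv unfolding young_above_def by auto
next
  fix x assume "x \<in> (\<Union>a\<in>{b..k}. Cons a ` young_above a m bs)"
  then obtain a v where h: "b \<le> a" "a \<le> k" "x = a # v" "v \<in> young a m"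
    "\<forall>i<m. bs ! i \<le> v ! i" unfolding young_above_def by auto
  then have "\<forall>i<Suc m. (b # bs) ! i \<le> x ! i" by (auto simp: nth_Cons split: nat.split)
  then show "x \<in> young_above k (Suc m) (b # bs)"
    using h Cons_in_young_Suc_iff unfolding young_above_def by auto
qed

lemma young_above_singleton: "young_above k (Suc 0) [b] = set (map (\<lambda>a. [a]) [b..<Suc k])"
  unfolding young_above_Cons by (auto simp: young_above_def young_0)

lemma young_above_replicate: "young_above c m (replicate m c) = {replicate m c}"
proof (intro set_eqI iffI)
  fix x assume "x \<in> young_above c m (replicate m c)"
  then have "length x = m" "\<forall>i<m. x ! i = c"
    unfolding young_above_def young_def by (auto intro: antisym)
  then show "x \<in> {replicate m c}" by (auto intro: nth_equalityI)
qed (auto simp: young_above_def young_def)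

text \<open>The diagrams between c^m and (c+1)^m, listed by raising the rows from the top.\<close>

fun raise_rows_chain :: "nat \<Rightarrow> nat \<Rightarrow> nat list list" where
  "raise_rows_chain c 0 = [[]]"
| "raise_rows_chain c (Suc m) = (c # replicate m c) # map (Cons (Suc c)) (raise_rows_chain c m)"

lemma length_raise_rows_chain: "length (raise_rows_chain c m) = Suc m"
  by (induction m) auto

lemma hd_raise_rows_chain: "hd (raise_rows_chain c m) = replicate m c"
  by (cases m) auto

lemma add_box_chain_raise_rows_chain: "add_box_chain (raise_rows_chain c m)"
proof (induction m)
  case 0 then show ?case by (simp add: add_box_chain_def)
next
  case (Suc m)
  have "raise_rows_chain c m \<noteq> []" by (cases m) auto
  then show ?case
    by (auto intro!: add_box_chain_Cons simp: add_box_chain_map_Cons Suc hd_map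
        hd_raise_rows_chain add_box_Suc_hd)
qed

lemma young_above_Suc_replicate:
  "young_above (Suc c) m (replicate m c) = set (raise_rows_chain c m)"
proof (induction m)
  case 0 then show ?case by (simp add: young_above_def young_0)
next
  case (Suc m)
  have "{c..Suc c} = {c, Suc c}" by auto
  then show ?case
    by (simp only: replicate_Suc young_above_Cons) (simp add: young_above_replicate Suc)
qed

lemma chain_partitionable_young_above:
  assumes "bs \<in> young k (Suc n)" "bs ! n < k"
  shows "chain_partitionable (young_above k (Suc n) bs)"
  using assms
proof (induction n arbitrary: k bs)
  case 0
  then obtain b where bs: "bs = [b]" "b < k" unfolding young_def by (cases bs) auto
  have "add_box_chain (map (\<lambda>a. [a]) [b..<Suc k])"
    unfolding add_box_chain_def using add_box_Suc_hd[of _ "[]"] by (auto simp del: upt_Suc)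
  then show ?case
    using bs by (simp only: young_above_singleton) (rule chain_partitionable_set, simp_all)
next
  case (Suc n)
  obtain b bs' where bs: "bs = b # bs'"
    using Suc.prems(1) unfolding young_def by (cases bs) auto
  have b: "b \<le> k" "bs' \<in> young b (Suc n)" and last_lt: "bs' ! n < k"
    using Suc.prems unfolding bs Cons_in_young_Suc_iff by simp_all
  have slice: "chain_partitionable (young_above a (Suc n) bs')" if "b \<le> a" "bs' ! n < a" for a
    using Suc.IH young_mono[OF b(2) that(1)] that(2) by blast
  show ?case
  proof (cases "bs' ! n < b")
    case True
    then show ?thesis
      unfolding bs young_above_Cons by (intro chain_partitionable_UN_image_Cons slice) auto
  next
    case False
    have "bs' ! i = b" if "i < Suc n" for i
    proof (rule antisym)
      show "bs' ! i \<le> b" using b(2) that unfolding young_def by blast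
      have "bs' ! n \<le> bs' ! i" using b(2) that unfolding young_def by simp
      then show "b \<le> bs' ! i" using False by linarith
    qed
    moreover have "length bs' = Suc n" using b(2) unfolding young_def by simp
    ultimately have const: "bs' = replicate (Suc n) b"
      by (intro nth_equalityI) (simp_all del: replicate_Suc)
    have "b < k" using last_lt const by (simp del: replicate_Suc)
    then have "{b..k} = {b..Suc b} \<union> {Suc (Suc b)..k}" by auto
    then have "young_above k (Suc (Suc n)) bs =
        set (raise_rows_chain b (Suc (Suc n))) \<union>
        (\<Union>a\<in>{Suc (Suc b)..k}. Cons a ` young_above a (Suc n) bs')"
      unfolding bs young_above_Cons young_above_Suc_replicate[symmetric] replicate_Suc[of "Suc n"]
      by (simp only: UN_Un const)
    moreover have "chain_partitionable (set (raise_rows_chain b (Suc (Suc n))))"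
      by (rule chain_partitionable_set[OF _ add_box_chain_raise_rows_chain])
        (simp add: length_raise_rows_chain del: raise_rows_chain.simps)
    moreover have "chain_partitionable (\<Union>a\<in>{Suc (Suc b)..k}. Cons a ` young_above a (Suc n) bs')"
      using const by (intro chain_partitionable_UN_image_Cons slice) (auto simp del: replicate_Suc)
    moreover have "set (raise_rows_chain b (Suc (Suc n))) \<inter>
        (\<Union>a\<in>{Suc (Suc b)..k}. Cons a ` young_above a (Suc n) bs') = {}"
      unfolding young_above_Suc_replicate[symmetric] young_above_def young_def by auto
    ultimately show ?thesis by (metis chain_partitionable_Un)
  qed
qed

theorem lemmaA2:
  fixes k l :: nat and lam :: "nat list"
  assumes "k \<ge> 1" and "l \<ge> 1"
    and "lam \<in> young k l"
    and "lam ! (l - 1) = 0"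
  shows "\<exists>P. partition_on (young_above k l lam) P \<and>
    (\<forall>B\<in>P. \<exists>xs. B = set xs \<and> length xs \<ge> 2 \<and>
        (\<forall>i. Suc i < length xs \<longrightarrow> add_box (xs ! i) (xs ! Suc i)))"
proof -
  obtain n where l: "l = Suc n" using assms(2) by (cases l) auto
  have "chain_partitionable (young_above k l lam)"
    using chain_partitionable_young_above[of lam k n] assms l by simp
  then show ?thesis unfolding chain_partitionable_def add_box_chain_def .
qed

end
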